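(* Let $p$ be a prime and $\mathbf{d}=(d_1,\dots,d_l)$ integers with $0\le d_\lambda\le p-1$, and assume $\gamma:=\mathbb{D}_\mathbf{d}-p\ge 0$. Then there is an equality of multisets $$\{\{\,j-\operatorname{sht}(j)\mid 1\le j\le p-1\,\}\}\ \uplus\ \{\{0,-1,\dots,-\gamma\}\}=\Big\{\Big\{\theta\big(\tfrac{s}{r}\big)+i\ \Big|\ \tfrac{s}{r}\in F,\ \gcd(s,r)=1,\ 0\le i\le N_r-1\Big\}\Big\}.$$
   Context: $\mathbb{D}_\mathbf{d}=\sum_\lambda d_\lambda(d_\lambda+1)/2$. $\mathbf{I}^*=\{(\lambda,i)\mid 1\le\lambda\le l,\ 1\le i\le d_\lambda\}$. $\operatorname{sht}(j)=\sum_{(\lambda,i)\in\mathbf{I}^*}\lfloor ij/p\rfloor$ for positive integers $j$. $\theta(y)=1-\lfloor y\rfloor+\lfloor py\rfloor-\sum_{(\lambda,i)\in\mathbf{I}^*}\lfloor iy\rfloor$ for $y\in(0,1]$. $F=\big(\bigcup_{j=1}^{M}\frac1j\mathbb{Z}\big)\cap(0,1]$ with $M=\max_\lambda d_\lambda$, each element written in lowest terms $s/r$. $N_r=\#\{(\lambda,i)\in\mathbf{I}^*\mid r\mid i\}$. $\uplus$ denotes union of multisets (multiplicities add). *)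

theory Defs
  imports Complex_Main "HOL-Library.Multiset" "HOL-Computational_Algebra.Primes"
begin

text \<open>The tuple d = (d_1,...,d_l) is a list; d_m is d ! (m - 1) for 1 \<le> m \<le> length d.\<close>

definition DD :: "nat list \<Rightarrow> nat" where
  "DD d = (\<Sum>m\<in>{1..length d}. d ! (m - 1) * (d ! (m - 1) + 1) div 2)"

definition Istar :: "nat list \<Rightarrow> (nat \<times> nat) set" where
  "Istar d = {(m, i). 1 \<le> m \<and> m \<le> length d \<and> 1 \<le> i \<and> i \<le> d ! (m - 1)}"

definition sht :: "nat \<Rightarrow> nat list \<Rightarrow> nat \<Rightarrow> int" where
  "sht p d j = (\<Sum>(m, i)\<in>Istar d. \<lfloor>(of_nat (i * j) :: rat) / of_nat p\<rfloor>)"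

definition theta :: "nat \<Rightarrow> nat list \<Rightarrow> rat \<Rightarrow> int" where
  "theta p d y = 1 - \<lfloor>y\<rfloor> + \<lfloor>of_nat p * y\<rfloor> - (\<Sum>(m, i)\<in>Istar d. \<lfloor>of_nat i * y\<rfloor>)"

definition Mmax :: "nat list \<Rightarrow> nat" where
  "Mmax d = Max (insert 0 (set d))"

definition Fset :: "nat list \<Rightarrow> rat set" where
  "Fset d = {y. 0 < y \<and> y \<le> 1 \<and> (\<exists>j\<in>{1..Mmax d}. \<exists>k::int. y = of_int k / of_nat j)}"

definition NN :: "nat list \<Rightarrow> nat \<Rightarrow> nat" where
  "NN d r = card {(m, i) \<in> Istar d. r dvd i}"

definition denom :: "rat \<Rightarrow> nat" where
  "denom y = nat (snd (quotient_of y))"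

end

theory Submission
  imports Defs
begin

text \<open>Sample \<open>\<theta>\<close> on the grid \<open>k/Q\<close> with \<open>Q = p \<cdot> M!\<close>, which contains every point of \<open>F\<close> and every
  \<open>j/p\<close>. Passing from \<open>k/Q\<close> to \<open>(k+1)/Q\<close>, the value of \<open>\<theta>\<close> rises by exactly one when
  \<open>(k+1)/Q = j/p\<close> with \<open>1 \<le> j < p\<close> (no \<open>\<lfloor>iy\<rfloor>\<close> jumps there, as \<open>p\<close> is prime and \<open>i < p\<close>),
  leaving the value \<open>j - sht(j)\<close>; otherwise it falls by \<open>N\<^sub>r\<close> when \<open>(k+1)/Q = s/r \<in> F\<close>, and
  stays put elsewhere. For any integer walk made of unit up steps and arbitrary down steps, the
  values left by the up steps together with the net descent \<open>[\<theta>(1), \<theta>(0)) = [p - D, 1)\<close>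
  are, with multiplicity, exactly the values swept by the down steps, here the intervals
  \<open>[\<theta>(s/r), \<theta>(s/r) + N\<^sub>r)\<close>.\<close>

lemma mset_map_upt_eq_sum: "mset (map f [m..<n]) = (\<Sum>j\<in>{m..<n}. {#f j#})"
  by (induction n) auto

lemma mset_map_plus_upt: "mset (map (\<lambda>i. a + int i) [0..<n]) = mset_set {a..<a + int n}"
proof (induction n)
  case (Suc n)
  have "{a..<a + int (Suc n)} = insert (a + int n) {a..<a + int n}" by auto
  with Suc show ?case by simp
qed simp

lemma mset_map_uminus_upt: "mset (map (\<lambda>k. - int k) [0..<n]) = mset_set {1 - int n..0}"
proof (induction n)
  case (Suc n)
  have "{1 - int (Suc n)..0} = insert (- int n) {1 - int n..0}" by auto
  with Suc show ?case by simp
qed simp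

lemma Istar_eq_Sigma: "Istar d = Sigma {1..length d} (\<lambda>m. {1..d ! (m - 1)})"
  by (auto simp: Istar_def)

lemma finite_Istar [simp]: "finite (Istar d)"
  by (simp add: Istar_eq_Sigma)

lemma Istar_snd_bounds:
  assumes "(m, i) \<in> Istar d"
  shows "1 \<le> i" "i \<le> Mmax d"
proof -
  from assms have "m - 1 < length d" "1 \<le> i" "i \<le> d ! (m - 1)"
    by (auto simp: Istar_def)
  moreover from \<open>m - 1 < length d\<close> have "d ! (m - 1) \<le> Mmax d"
    by (simp add: Mmax_def)
  ultimately show "1 \<le> i" "i \<le> Mmax d" by simp_all
qed

lemma DD_eq_sum_Istar: "DD d = (\<Sum>(m, i)\<in>Istar d. i)"
proof -
  have "(\<Sum>(m, i)\<in>Istar d. i) = (\<Sum>m\<in>{1..length d}. \<Sum>i\<in>{1..d ! (m - 1)}. i)"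
    by (simp add: Istar_eq_Sigma sum.Sigma)
  then show ?thesis
    by (simp add: DD_def Sum_Icc_nat)
qed

lemma denom_of_nat_div_dvd_iff:
  assumes "0 < n"
  shows "denom (of_nat k / of_nat n) dvd i \<longleftrightarrow> n dvd i * k"
proof -
  obtain s r where q: "quotient_of (of_nat k / of_nat n) = (s, r)"
    by (cases "quotient_of (of_nat k / of_nat n)")
  have "0 < r" using quotient_of_denom_pos[OF q] .
  have "coprime r s" using quotient_of_coprime[OF q] by (simp add: coprime_commute)
  have "(of_nat k / of_nat n :: rat) = of_int s / of_int r" using quotient_of_div[OF q] .
  with assms \<open>0 < r\<close> have "(of_int (int k * r) :: rat) = of_int (s * int n)"
    by (simp add: field_simps)
  then have cross: "int k * r = s * int n" by (simp only: of_int_eq_iff)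
  have "denom (of_nat k / of_nat n) dvd i \<longleftrightarrow> r dvd int i"
    using \<open>0 < r\<close> by (simp add: denom_def q flip: int_dvd_int_iff)
  also have "\<dots> \<longleftrightarrow> r dvd int i * s"
    using \<open>coprime r s\<close> by (simp add: coprime_dvd_mult_left_iff)
  also have "\<dots> \<longleftrightarrow> int n * r dvd int i * s * int n"
    using assms by (simp add: mult.commute)
  also have "int i * s * int n = int i * int k * r"
    using cross by (simp add: algebra_simps)
  also have "int n * r dvd int i * int k * r \<longleftrightarrow> n dvd i * k"
    using \<open>0 < r\<close> by (simp flip: of_nat_mult int_dvd_int_iff)
  finally show ?thesis .
qed

lemma NN_denom_of_nat_div:
  assumes "0 < n"
  shows "int (NN d (denom (of_nat k / of_nat n))) = (\<Sum>(m, i)\<in>Istar d. of_bool (n dvd i * k))"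
proof -
  have "{(m, i) \<in> Istar d. denom (of_nat k / of_nat n) dvd i} = Istar d \<inter> {x. n dvd snd x * k}"
    using denom_of_nat_div_dvd_iff[OF assms] by auto
  then show ?thesis
    using sum_of_bool_eq[of "Istar d" "\<lambda>x. n dvd snd x * k"] by (simp add: NN_def case_prod_beta)
qed

lemma floor_of_nat_mult_div:
  "\<lfloor>of_nat a * (of_nat k / of_nat n :: 'a :: floor_ceiling)\<rfloor> = int (a * k div n)"
  by (metis floor_divide_of_nat_eq of_nat_mult times_divide_eq_right)

lemma theta_of_nat_div:
  "theta p d (of_nat k / of_nat n)
     = 1 - int (k div n) + int (p * k div n) - (\<Sum>(m, i)\<in>Istar d. int (i * k div n))"
  unfolding theta_def floor_of_nat_mult_div floor_divide_of_nat_eq by simp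

lemma theta_one: "theta p d 1 = int p - int (DD d)"
  using theta_of_nat_div[of p d 1 1] by (simp add: DD_eq_sum_Istar case_prod_beta)

lemma theta_zero: "theta p d 0 = 1"
  by (simp add: theta_def)

lemma theta_of_nat_div_self:
  assumes "j < p"
  shows "theta p d (of_nat j / of_nat p) = 1 + int j - sht p d j"
  using theta_of_nat_div[of p d j p] assms
  by (simp only: sht_def floor_divide_of_nat_eq) simp

lemma mult_Suc_div_eq:
  assumes "a dvd n" "0 < n"
  shows "int (a * Suc k div n) = int (a * k div n) + of_bool (n dvd a * Suc k)"
proof -
  obtain c where n: "n = a * c" using assms(1) by blast
  with assms(2) have "0 < a" "0 < c" by auto
  then have "a * Suc k div n = Suc k div c" "a * k div n = k div c" "n dvd a * Suc k \<longleftrightarrow> c dvd Suc k"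
    by (simp_all add: n del: mult_Suc_right)
  then show ?thesis
    using div_Suc[of k c] by (simp add: dvd_eq_mod_eq_0)
qed

lemma walk_count:
  fixes f :: "nat \<Rightarrow> int"
  assumes "\<And>k. k < n \<Longrightarrow> k \<in> U \<Longrightarrow> f (Suc k) = f k + 1"
    and "\<And>k. k < n \<Longrightarrow> k \<notin> U \<Longrightarrow> f (Suc k) \<le> f k"
  shows "int (count (\<Sum>k\<in>{..<n} \<inter> U. {#f k#}) v)
           - int (count (\<Sum>k\<in>{..<n} - U. mset_set {f (Suc k)..<f k}) v)
         = of_bool (v < f n) - of_bool (v < f 0)"
  using assms
proof (induction n)
  case 0
  then show ?case by simp
next
  case (Suc n)
  then have IH: "int (count (\<Sum>k\<in>{..<n} \<inter> U. {#f k#}) v)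
           - int (count (\<Sum>k\<in>{..<n} - U. mset_set {f (Suc k)..<f k}) v)
         = of_bool (v < f n) - of_bool (v < f 0)" by simp
  show ?case
  proof (cases "n \<in> U")
    case True
    then have "{..<Suc n} \<inter> U = insert n ({..<n} \<inter> U)" "{..<Suc n} - U = {..<n} - U"
      by (auto simp: less_Suc_eq)
    with True Suc.prems(1)[of n] IH show ?thesis by simp
  next
    case False
    then have "{..<Suc n} \<inter> U = {..<n} \<inter> U" "{..<Suc n} - U = insert n ({..<n} - U)"
      by (auto simp: less_Suc_eq)
    with False Suc.prems(2)[of n] IH show ?thesis
      by (simp add: count_mset_set' of_bool_def split: if_splits)
  qed
qed

lemma walk_mset:
  fixes f :: "nat \<Rightarrow> int"
  assumes "\<And>k. k < n \<Longrightarrow> k \<in> U \<Longrightarrow> f (Suc k) = f k + 1"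
    and "\<And>k. k < n \<Longrightarrow> k \<notin> U \<Longrightarrow> f (Suc k) \<le> f k"
    and "f n \<le> f 0"
  shows "(\<Sum>k\<in>{..<n} \<inter> U. {#f k#}) + mset_set {f n..<f 0}
       = (\<Sum>k\<in>{..<n} - U. mset_set {f (Suc k)..<f k})"
proof (rule multiset_eqI)
  fix v
  have "int (count (mset_set {f n..<f 0}) v) = of_bool (v < f 0) - of_bool (v < f n)"
    using assms(3) by (auto simp: count_mset_set')
  then have "int (count ((\<Sum>k\<in>{..<n} \<inter> U. {#f k#}) + mset_set {f n..<f 0}) v)
      = int (count (\<Sum>k\<in>{..<n} - U. mset_set {f (Suc k)..<f k}) v)"
    using walk_count[of n U f v] assms(1,2) by simp
  then show "count ((\<Sum>k\<in>{..<n} \<inter> U. {#f k#}) + mset_set {f n..<f 0}) v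
      = count (\<Sum>k\<in>{..<n} - U. mset_set {f (Suc k)..<f k}) v"
    by (simp only: of_nat_eq_iff)
qed

locale theta_setting =
  fixes p :: nat and d :: "nat list"
  assumes prime_p: "prime p"
    and entries_le: "\<forall>x\<in>set d. x \<le> p - 1"
begin

definition grid_den :: nat where
  "grid_den = p * fact (Mmax d)"

abbreviation grid :: "nat \<Rightarrow> rat" where
  "grid k \<equiv> of_nat k / of_nat grid_den"

text \<open>Step \<open>k\<close> goes from \<open>grid k\<close> to \<open>grid (Suc k)\<close>; it is an up step iff it ends at some
  \<open>j/p\<close> with \<open>1 \<le> j < p\<close>.\<close>
definition up_steps :: "nat set" where
  "up_steps = {k. fact (Mmax d) dvd Suc k \<and> Suc k < grid_den}"

lemma Mmax_less: "Mmax d < p"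
proof -
  have "0 < p" using prime_gt_0_nat[OF prime_p] .
  moreover have "Mmax d \<le> p - 1"
    using entries_le by (simp add: Mmax_def)
  ultimately show ?thesis by simp
qed

lemma grid_den_pos: "0 < grid_den"
  using prime_gt_0_nat[OF prime_p] by (simp add: grid_den_def)

lemma dvd_grid_den: "1 \<le> j \<Longrightarrow> j \<le> Mmax d \<Longrightarrow> j dvd grid_den"
  by (simp add: grid_den_def dvd_fact)

lemma up_step_no_jump:
  assumes "k \<in> up_steps" "1 \<le> j" "j \<le> Mmax d"
  shows "\<not> grid_den dvd j * Suc k"
proof
  assume dvd: "grid_den dvd j * Suc k"
  from assms(1) obtain t where t: "Suc k = fact (Mmax d) * t" "Suc k < p * fact (Mmax d)"
    by (auto simp: up_steps_def grid_den_def)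
  then have "t < p" by (simp add: mult.commute)
  from t(1) have "0 < t" by (cases t) auto
  from dvd have "p * fact (Mmax d) dvd j * t * fact (Mmax d)"
    by (simp add: grid_den_def t mult_ac)
  then have "p dvd j * t" by simp
  then have "p dvd j \<or> p dvd t"
    using prime_p prime_dvd_mult_iff by blast
  moreover have "j < p" using assms(3) Mmax_less by simp
  ultimately show False
    using \<open>0 < t\<close> \<open>t < p\<close> assms(2) by (auto dest: dvd_imp_le)
qed

lemma theta_grid_Suc:
  assumes "k < grid_den"
  shows "theta p d (grid (Suc k)) + int (NN d (denom (grid (Suc k))))
       = theta p d (grid k) + of_bool (k \<in> up_steps)"
proof -
  have "p dvd grid_den" "fact (Mmax d) dvd grid_den" "0 < p"
    using prime_gt_0_nat[OF prime_p] by (simp_all add: grid_den_def)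
  have floor_step: "int (Suc k div grid_den) = int (k div grid_den) + of_bool (Suc k = grid_den)"
    using mult_Suc_div_eq[of 1 grid_den k] grid_den_pos assms by (auto dest: dvd_imp_le)
  have "grid_den dvd p * Suc k \<longleftrightarrow> fact (Mmax d) dvd Suc k"
    using \<open>0 < p\<close> by (simp add: grid_den_def del: mult_Suc_right)
  then have p_step: "int (p * Suc k div grid_den)
      = int (p * k div grid_den) + of_bool (fact (Mmax d) dvd Suc k)"
    using mult_Suc_div_eq[OF \<open>p dvd grid_den\<close> grid_den_pos, of k] by simp
  have "(\<Sum>(m, i)\<in>Istar d. int (i * Suc k div grid_den))
      = (\<Sum>(m, i)\<in>Istar d. int (i * k div grid_den) + of_bool (grid_den dvd i * Suc k))"
    using mult_Suc_div_eq[OF dvd_grid_den grid_den_pos] Istar_snd_bounds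
    by (intro sum.cong) auto
  also have "\<dots> = (\<Sum>(m, i)\<in>Istar d. int (i * k div grid_den))
                    + (\<Sum>(m, i)\<in>Istar d. of_bool (grid_den dvd i * Suc k))"
    by (simp only: split_def sum.distrib)
  also have "\<dots> = (\<Sum>(m, i)\<in>Istar d. int (i * k div grid_den)) + int (NN d (denom (grid (Suc k))))"
    by (simp only: NN_denom_of_nat_div[OF grid_den_pos])
  finally have Istar_step: "(\<Sum>(m, i)\<in>Istar d. int (i * Suc k div grid_den))
      = (\<Sum>(m, i)\<in>Istar d. int (i * k div grid_den)) + int (NN d (denom (grid (Suc k))))" .
  have "of_bool (fact (Mmax d) dvd Suc k) - of_bool (Suc k = grid_den)
      = (of_bool (k \<in> up_steps) :: int)"
    using assms \<open>fact (Mmax d) dvd grid_den\<close> by (auto simp: up_steps_def)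
  then show ?thesis
    unfolding theta_of_nat_div floor_step p_step Istar_step by simp
qed

lemma NN_up_step:
  assumes "k \<in> up_steps"
  shows "NN d (denom (grid (Suc k))) = 0"
proof -
  have "(\<Sum>(m, i)\<in>Istar d. of_bool (grid_den dvd i * Suc k)) = (0 :: int)"
    using up_step_no_jump[OF assms] Istar_snd_bounds by (intro sum.neutral) auto
  then show ?thesis
    using NN_denom_of_nat_div[OF grid_den_pos] by (metis of_nat_eq_0_iff)
qed

lemma grid_in_Fset_iff:
  assumes "0 < k" "k \<le> grid_den"
  shows "grid k \<in> Fset d \<longleftrightarrow> (\<exists>j\<in>{1..Mmax d}. grid_den dvd j * k)"
proof
  assume "grid k \<in> Fset d"
  then obtain j a where j: "j \<in> {1..Mmax d}" and a: "grid k = of_int a / of_nat j"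
    by (auto simp: Fset_def)
  with grid_den_pos have "(of_int (int (j * k)) :: rat) = of_int (a * int grid_den)"
    by (simp add: field_simps)
  then have "int (j * k) = a * int grid_den" by (simp only: of_int_eq_iff)
  then have "grid_den dvd j * k" by (metis dvd_triv_right int_dvd_int_iff)
  with j show "\<exists>j\<in>{1..Mmax d}. grid_den dvd j * k" ..
next
  assume "\<exists>j\<in>{1..Mmax d}. grid_den dvd j * k"
  then obtain j where j: "j \<in> {1..Mmax d}" and "grid_den dvd j * k" ..
  then obtain e where e: "j * k = grid_den * e" by (elim dvdE)
  then have "(of_nat (j * k) :: rat) = of_nat (grid_den * e)" by simp
  then have "grid k = of_int (int e) / of_nat j"
    using grid_den_pos j by (simp add: field_simps)
  moreover have "0 < grid k" "grid k \<le> 1"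
    using assms by simp_all
  ultimately show "grid k \<in> Fset d"
    using j unfolding Fset_def by blast
qed

lemma grid_in_Fset_of_NN:
  assumes "NN d (denom (grid k)) \<noteq> 0" "0 < k" "k \<le> grid_den"
  shows "grid k \<in> Fset d"
proof -
  have "(\<Sum>(m, i)\<in>Istar d. of_bool (grid_den dvd i * k)) \<noteq> (0 :: int)"
    using assms(1) NN_denom_of_nat_div[OF grid_den_pos] by (metis of_nat_eq_0_iff)
  then obtain m i where "(m, i) \<in> Istar d" "grid_den dvd i * k"
    by (auto elim: sum.not_neutral_contains_not_neutral)
  then show ?thesis
    using grid_in_Fset_iff[OF assms(2,3)] Istar_snd_bounds by auto
qed

lemma Fset_subset_grid: "Fset d \<subseteq> grid ` {1..grid_den}"
proof
  fix y assume "y \<in> Fset d"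
  then obtain j a where y: "0 < y" "y \<le> 1" "y = of_int a / of_nat j" and j: "1 \<le> j" "j \<le> Mmax d"
    by (auto simp: Fset_def)
  obtain q where q: "grid_den = j * q"
    using dvd_grid_den[OF j] by (auto elim: dvdE)
  with grid_den_pos have "0 < q" by simp
  from y j have "0 < a" by (simp add: zero_less_divide_iff)
  define k where "k = nat a * q"
  have "grid k = y"
    using y(3) q \<open>0 < q\<close> \<open>0 < a\<close> by (simp add: k_def field_simps)
  moreover have "0 < k"
    using \<open>0 < a\<close> \<open>0 < q\<close> by (simp add: k_def)
  moreover have "k \<le> grid_den"
  proof -
    have "(of_nat k :: rat) / of_nat grid_den \<le> 1" using \<open>grid k = y\<close> y(2) by simp
    then show ?thesis using grid_den_pos by (simp add: divide_le_eq_1)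
  qed
  ultimately show "y \<in> grid ` {1..grid_den}" by force
qed

lemma up_steps_eq: "{..<grid_den} \<inter> up_steps = (\<lambda>j. j * fact (Mmax d) - 1) ` {1..<p}"
proof (intro equalityI subsetI)
  fix k assume "k \<in> {..<grid_den} \<inter> up_steps"
  then obtain t where t: "Suc k = t * fact (Mmax d)" "Suc k < p * fact (Mmax d)"
    by (auto simp: up_steps_def grid_den_def mult.commute elim: dvdE)
  then have "t < p" by simp
  moreover from t(1) have "0 < t" by (cases t) auto
  ultimately show "k \<in> (\<lambda>j. j * fact (Mmax d) - 1) ` {1..<p}"
    using t(1) by (intro image_eqI[of _ _ t]) auto
next
  fix k assume "k \<in> (\<lambda>j. j * fact (Mmax d) - 1) ` {1..<p}"
  then obtain j where k: "k = j * fact (Mmax d) - 1" and "1 \<le> j" "j < p" by auto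
  then have "0 < j * fact (Mmax d)" "j * fact (Mmax d) < p * fact (Mmax d)" by simp_all
  then have "Suc k = j * fact (Mmax d)" "Suc k < grid_den"
    unfolding k grid_den_def by linarith+
  then show "k \<in> {..<grid_den} \<inter> up_steps"
    by (simp add: up_steps_def)
qed

lemma theta_before_up_step:
  assumes "j \<in> {1..<p}"
  shows "theta p d (grid (j * fact (Mmax d) - 1)) = int j - sht p d j"
proof -
  define k where "k = j * fact (Mmax d) - 1"
  have "k \<in> {..<grid_den} \<inter> up_steps"
    using assms by (auto simp: k_def up_steps_eq)
  then have "theta p d (grid (Suc k)) = theta p d (grid k) + 1"
    using theta_grid_Suc[of k] NN_up_step[of k] by simp
  moreover have "grid (Suc k) = of_nat j / of_nat p"
    using assms by (simp add: k_def grid_den_def of_nat_diff)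
  ultimately show ?thesis
    using theta_of_nat_div_self[of j p d] assms by (simp add: k_def)
qed

lemma sum_up_steps:
  "(\<Sum>k\<in>{..<grid_den} \<inter> up_steps. {#theta p d (grid k)#})
     = mset (map (\<lambda>j. int j - sht p d j) [1..<p])"
proof -
  have "inj_on (\<lambda>j. j * fact (Mmax d) - 1) {1..<p}"
  proof (rule inj_onI)
    fix x y assume "x \<in> {1..<p}" "y \<in> {1..<p}" "x * fact (Mmax d) - 1 = y * fact (Mmax d) - 1"
    moreover from this have "0 < x * fact (Mmax d)" "0 < y * fact (Mmax d)" by simp_all
    ultimately have "x * fact (Mmax d) = y * fact (Mmax d)" by linarith
    then show "x = y" by simp
  qed
  then show ?thesis
    unfolding up_steps_eq mset_map_upt_eq_sum
    by (rule sum.reindex_cong[OF _ refl]) (simp only: theta_before_up_step)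
qed

lemma sum_down_steps:
  "(\<Sum>k\<in>{..<grid_den} - up_steps. mset_set {theta p d (grid (Suc k))..<theta p d (grid k)})
     = (\<Sum>y\<in>Fset d. mset (map (\<lambda>i. theta p d y + int i) [0..<NN d (denom y)]))"
    (is "?lhs = (\<Sum>y\<in>Fset d. ?g y)")
proof -
  define S where "S = {k\<in>{..<grid_den}. grid (Suc k) \<in> Fset d}"
  have "?lhs = (\<Sum>k\<in>{..<grid_den} - up_steps. ?g (grid (Suc k)))"
  proof (rule sum.cong)
    fix k assume "k \<in> {..<grid_den} - up_steps"
    then show "mset_set {theta p d (grid (Suc k))..<theta p d (grid k)} = ?g (grid (Suc k))"
      using theta_grid_Suc[of k] unfolding mset_map_plus_upt by (simp flip: of_nat_Suc)
  qed simp
  also have "\<dots> = (\<Sum>k\<in>S. ?g (grid (Suc k)))"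
  proof (rule sum.mono_neutral_right)
    show "S \<subseteq> {..<grid_den} - up_steps"
    proof
      fix k assume "k \<in> S"
      then have "k < grid_den" "grid (Suc k) \<in> Fset d" by (simp_all add: S_def)
      then obtain j where "j \<in> {1..Mmax d}" "grid_den dvd j * Suc k"
        using grid_in_Fset_iff[of "Suc k"] by auto
      then show "k \<in> {..<grid_den} - up_steps"
        using up_step_no_jump[of k j] \<open>k < grid_den\<close> by auto
    qed
    show "\<forall>k\<in>{..<grid_den} - up_steps - S. ?g (grid (Suc k)) = {#}"
    proof
      fix k assume "k \<in> {..<grid_den} - up_steps - S"
      then have "NN d (denom (grid (Suc k))) = 0"
        using grid_in_Fset_of_NN[of "Suc k"] by (auto simp: S_def)
      then show "?g (grid (Suc k)) = {#}" by simp
    qed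
  qed simp
  also have "\<dots> = (\<Sum>y\<in>Fset d. ?g y)"
  proof -
    have "inj_on (\<lambda>k. grid (Suc k)) S"
      using grid_den_pos by (auto simp: inj_on_def)
    moreover have "(\<lambda>k. grid (Suc k)) ` S = Fset d"
    proof
      show "(\<lambda>k. grid (Suc k)) ` S \<subseteq> Fset d" by (auto simp: S_def)
      show "Fset d \<subseteq> (\<lambda>k. grid (Suc k)) ` S"
      proof
        fix y assume "y \<in> Fset d"
        with Fset_subset_grid obtain k where k: "k \<in> {1..grid_den}" "y = grid k" by auto
        then have "k - 1 \<in> S" "y = grid (Suc (k - 1))"
          using \<open>y \<in> Fset d\<close> by (auto simp: S_def)
        then show "y \<in> (\<lambda>k. grid (Suc k)) ` S" by blast
      qed
    qed
    ultimately show ?thesis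
      using sum.reindex[of "\<lambda>k. grid (Suc k)" S ?g] by (simp only: comp_def)
  qed
  finally show ?thesis .
qed

end

theorem mainTheorem4:
  fixes p :: nat and d :: "nat list"
  assumes "prime p"
    and "\<forall>x\<in>set d. x \<le> p - 1"
    and "int (DD d) - int p \<ge> 0"
  shows "mset (map (\<lambda>j. int j - sht p d j) [1..<p])
           + mset (map (\<lambda>k. - int k) [0..<DD d - p + 1])
         = (\<Sum>y\<in>Fset d. mset (map (\<lambda>i. theta p d y + int i) [0..<NN d (denom y)]))"
proof -
  interpret theta_setting p d
    using assms(1,2) by unfold_locales
  let ?f = "\<lambda>k. theta p d (grid k)"
  have ends: "?f grid_den = int p - int (DD d)" "?f 0 = 1"
    using grid_den_pos by (simp_all add: theta_one theta_zero)
  have "(\<Sum>k\<in>{..<grid_den} \<inter> up_steps. {#?f k#}) + mset_set {?f grid_den..<?f 0}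
      = (\<Sum>k\<in>{..<grid_den} - up_steps. mset_set {?f (Suc k)..<?f k})"
  proof (rule walk_mset)
    show "?f (Suc k) = ?f k + 1" if "k < grid_den" "k \<in> up_steps" for k
      using theta_grid_Suc[OF that(1)] NN_up_step[OF that(2)] that(2) by simp
    show "?f (Suc k) \<le> ?f k" if "k < grid_den" "k \<notin> up_steps" for k
      using theta_grid_Suc[OF that(1)] that(2) by simp
    show "?f grid_den \<le> ?f 0"
      using ends assms(3) by simp
  qed
  moreover have "{?f grid_den..<?f 0} = {1 - int (DD d - p + 1)..0}"
    using ends assms(3) by auto
  ultimately show ?thesis
    by (simp only: sum_up_steps sum_down_steps mset_map_uminus_upt)
qed

end
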